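(* Let $\mathcal{M}=(S,P,E,s_{init},L)$ be a CTMC with absorbing goal state $g$, let $\varepsilon,\delta\geq0$, $q=\max_{p\in S}E(p)$, $t\geq0$, and $s,s'\in S$ with $s\sim_{\varepsilon,\delta}s'$. (1) If $\delta=0$ then $|\mathrm{Pr}_s(\lozenge^{\leq t}g)-\mathrm{Pr}_{s'}(\lozenge^{\leq t}g)|\leq1-e^{-qt\varepsilon}$. (2) If $\varepsilon=0$ then $|\mathrm{Pr}_s(\lozenge^{\leq t}g)-\mathrm{Pr}_{s'}(\lozenge^{\leq t}g)|\leq1-e^{-qt(e^{\delta}-1)}$. (3) If $\varepsilon=\delta=0$ then $\mathrm{Pr}_s(\lozenge^{\leq t}g)=\mathrm{Pr}_{s'}(\lozenge^{\leq t}g)$.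
   Context: A CTMC $(S,P,E,s_{init},L)$: finite $S$, $P\colon S\to\mathrm{Distr}(S)$ ($P(s,A)=\sum_{a\in A}P(s,a)$), $E\colon S\to\mathbb{R}_{>0}$, initial state, labeling $L$; residence time in $s$ is exponential with rate $E(s)$, then a jump to $s'$ with probability $P(s,s')$. $\mathrm{Pr}_s(\lozenge^{\leq t}g)$: probability of reaching $g$ from $s$ within time $t$. For $R\subseteq S\times S$, $R(A)=\{t'\mid\exists a\in A:(a,t')\in R\}$. A reflexive symmetric $R$ is an $(\varepsilon,\delta)$-bisimulation if for all $(s,s')\in R$: $L(s)=L(s')$, $|\ln E(s)-\ln E(s')|\leq\delta$, and $P(s,A)\leq P(s',R(A))+\varepsilon$ for all $A\subseteq S$; $s\sim_{\varepsilon,\delta}s'$ if some such relation contains $(s,s')$. Standing assumption: $g$ is the unique goal state, absorbing and uniquely labeled, and all states from which $g$ is unreachable are collapsed into one absorbing uniquely labeled fail state. *)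

theory Defs
  imports "HOL-Probability.Probability"
begin

text \<open>A CTMC over a finite state type 's: embedded jump distribution P, exit rates E,
  labelling L. Residence time in a state x is exponential with rate E x.\<close>

definition ctmc :: "('s::finite \<Rightarrow> 's pmf) \<Rightarrow> ('s \<Rightarrow> real) \<Rightarrow> bool" where
  "ctmc P E \<longleftrightarrow> (\<forall>x. 0 < E x)"

definition reaches :: "('s \<Rightarrow> 's pmf) \<Rightarrow> 's \<Rightarrow> 's \<Rightarrow> bool" where
  "reaches P x y \<longleftrightarrow> (x, y) \<in> {(a, b). b \<in> set_pmf (P a)}\<^sup>*"

definition standing_assm :: "('s \<Rightarrow> 's pmf) \<Rightarrow> ('s \<Rightarrow> 'l) \<Rightarrow> 's \<Rightarrow> bool" where
  "standing_assm P L g \<longleftrightarrow>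
     P g = return_pmf g \<and> (\<forall>x. L x = L g \<longrightarrow> x = g) \<and>
     (\<forall>f. \<not> reaches P f g \<longrightarrow>
        P f = return_pmf f \<and> (\<forall>x. L x = L f \<longrightarrow> x = f) \<and>
        (\<forall>x. \<not> reaches P x g \<longrightarrow> x = f))"

definition first_hit_paths :: "'s \<Rightarrow> 's \<Rightarrow> nat \<Rightarrow> 's list set" where
  "first_hit_paths s g n = {xs. length xs = Suc n \<and> xs ! 0 = s \<and> xs ! n = g \<and>
                                 (\<forall>i<n. xs ! i \<noteq> g)}"

text \<open>Probability (under the path measure) of the cylinder of paths following the
  state sequence xs (of length n+1) with the sum of the first n residence times at most t:
  product of jump probabilities times the probability that a sum of independent
  exponential residence times is \<le> t.\<close>
definition cyl_prob :: "('s \<Rightarrow> 's pmf) \<Rightarrow> ('s \<Rightarrow> real) \<Rightarrow> nat \<Rightarrow> 's list \<Rightarrow> real \<Rightarrow> real" where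
  "cyl_prob P E n xs t =
     (\<Prod>i<n. pmf (P (xs ! i)) (xs ! Suc i)) *
     measure (PiM {..<n} (\<lambda>i. density lborel (exponential_density (E (xs ! i)))))
             {x \<in> space (PiM {..<n} (\<lambda>i. density lborel (exponential_density (E (xs ! i))))).
                (\<Sum>i<n. x i) \<le> t}"

text \<open>Pr_s(reach g within time t): the event is the disjoint union over n of the events
  "the n-th jump is the first visit to g and happens by time t".\<close>
definition reach_prob :: "('s::finite \<Rightarrow> 's pmf) \<Rightarrow> ('s \<Rightarrow> real) \<Rightarrow> 's \<Rightarrow> 's \<Rightarrow> real \<Rightarrow> real" where
  "reach_prob P E g s t = (\<Sum>n. \<Sum>xs\<in>first_hit_paths s g n. cyl_prob P E n xs t)"

definition eps_delta_bisim ::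
  "('s \<Rightarrow> 's pmf) \<Rightarrow> ('s \<Rightarrow> real) \<Rightarrow> ('s \<Rightarrow> 'l) \<Rightarrow> real \<Rightarrow> real \<Rightarrow> ('s \<times> 's) set \<Rightarrow> bool" where
  "eps_delta_bisim P E L \<epsilon> \<delta> R \<longleftrightarrow> refl R \<and> sym R \<and>
     (\<forall>(x, y) \<in> R. L x = L y \<and> \<bar>ln (E x) - ln (E y)\<bar> \<le> \<delta> \<and>
        (\<forall>A. measure_pmf.prob (P x) A \<le> measure_pmf.prob (P y) (R `` A) + \<epsilon>))"

definition bisimilar ::
  "('s \<Rightarrow> 's pmf) \<Rightarrow> ('s \<Rightarrow> real) \<Rightarrow> ('s \<Rightarrow> 'l) \<Rightarrow> real \<Rightarrow> real \<Rightarrow> 's \<Rightarrow> 's \<Rightarrow> bool" where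
  "bisimilar P E L \<epsilon> \<delta> x y \<longleftrightarrow> (\<exists>R. eps_delta_bisim P E L \<epsilon> \<delta> R \<and> (x, y) \<in> R)"

end

theory Submission
  imports Defs
begin

text \<open>
  The probability of reaching g from x within time t is the limit of the probability
  F_N(x, t) of doing so within N jumps, and for x \<noteq> g the first jump gives
  F_(N+1)(x, t) = \<integral> \<Sum>_y P(x, y) F_N(y, t - u) d Exp(E x)(u).
  By induction on N, F_N(x, t) - F_N(x', t) \<le> 1 - exp (- c t) for related x, x',
  with c = q \<epsilon> resp. c = q (exp \<delta> - 1). In the induction step the set inequality of the
  bisimulation carries a bound D on the successors over to the jump distributions at the
  price D + \<epsilon> (1 - D) (a layer-cake argument), and rates that differ by at most c change
  the sojourn-time densities by at most the same amount. The bound 1 - exp (- c t) survives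
  the step because integrating the resulting pointwise bound over the first sojourn time
  returns exactly 1 - exp (- c t).
\<close>

section \<open>Exponential delays\<close>

abbreviation exp_dist :: "real \<Rightarrow> real measure" where
  "exp_dist l \<equiv> density lborel (exponential_density l)"

text \<open>If \<open>a \<tau>\<close> is the probability that an event occurs within time \<open>\<tau>\<close>, then
  \<^term>\<open>exp_delay l a t\<close> is the probability that it occurs within time \<open>t\<close> when it can only
  start after an \<open>Exp(l)\<close>-distributed sojourn.\<close>

definition exp_delay :: "real \<Rightarrow> (real \<Rightarrow> real) \<Rightarrow> real \<Rightarrow> real" where
  "exp_delay l a t = (\<integral>u. a (t - u) \<partial>exp_dist l)"

text \<open>The shape of a time-bounded reachability probability as a function of the time bound.\<close>

definition causal_prob :: "(real \<Rightarrow> real) \<Rightarrow> bool" where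
  "causal_prob a \<longleftrightarrow> a \<in> borel_measurable borel \<and> (\<forall>\<tau>. 0 \<le> a \<tau> \<and> a \<tau> \<le> 1) \<and> (\<forall>\<tau><0. a \<tau> = 0)"

lemma causal_probD:
  assumes "causal_prob a"
  shows "0 \<le> a \<tau>" "a \<tau> \<le> 1" "a \<in> borel_measurable borel" "\<tau> < 0 \<Longrightarrow> a \<tau> = 0"
  using assms by (auto simp: causal_prob_def)

lemma causal_prob_cmult:
  assumes "0 \<le> c" "c \<le> 1" "causal_prob a"
  shows "causal_prob (\<lambda>\<tau>. c * a \<tau>)"
  using assms by (auto simp: causal_prob_def mult_le_one)

lemma integrable_exp_dist_shift:
  fixes f :: "real \<Rightarrow> real"
  assumes "0 < l" "f \<in> borel_measurable borel" "\<And>\<tau>. \<bar>f \<tau>\<bar> \<le> B"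
  shows "integrable (exp_dist l) (\<lambda>u. f (t - u))"
proof -
  interpret prob_space "exp_dist l" using assms(1) by (rule prob_space_exponential_density)
  show ?thesis by (rule integrable_const_bound[where B=B]) (use assms in auto)
qed

lemma integrable_exp_dist_causal:
  assumes "0 < l" "causal_prob a"
  shows "integrable (exp_dist l) (\<lambda>u. a (t - u))"
  using assms by (intro integrable_exp_dist_shift[where B=1]) (auto simp: causal_prob_def)

lemma integrable_exponential_density_shift:
  fixes f :: "real \<Rightarrow> real"
  assumes "0 < l" "f \<in> borel_measurable borel" "\<And>\<tau>. \<bar>f \<tau>\<bar> \<le> B"
  shows "integrable lborel (\<lambda>u. exponential_density l u * f (t - u))"
  using integrable_exp_dist_shift[OF assms] assms exponential_density_nonneg[OF assms(1)]
    integrable_density[of "\<lambda>u. f (t - u)" lborel "exponential_density l"]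
  by (simp add: exponential_density_def)

lemma exp_delay_eq_lborel:
  assumes "0 < l" "a \<in> borel_measurable borel"
  shows "exp_delay l a t = (\<integral>u. exponential_density l u * a (t - u) \<partial>lborel)"
  unfolding exp_delay_def using assms exponential_density_nonneg[OF assms(1)]
  by (subst integral_density) (auto simp: exponential_density_def)

lemma exp_delay_sum:
  assumes "\<And>i. i \<in> I \<Longrightarrow> integrable (exp_dist l) (\<lambda>u. f i (t - u))"
  shows "exp_delay l (\<lambda>\<tau>. \<Sum>i\<in>I. f i \<tau>) t = (\<Sum>i\<in>I. exp_delay l (f i) t)"
  unfolding exp_delay_def using assms by (rule Bochner_Integration.integral_sum)

lemma exp_delay_cmult: "exp_delay l (\<lambda>\<tau>. c * a \<tau>) t = c * exp_delay l a t"
  unfolding exp_delay_def by simp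

lemma causal_prob_exp_delay:
  assumes l: "0 < l" and a: "causal_prob a"
  shows "causal_prob (exp_delay l a)"
proof -
  interpret prob_space "exp_dist l" using l by (rule prob_space_exponential_density)
  have [measurable]: "a \<in> borel_measurable borel"
    using a by (rule causal_probD)
  have "exp_delay l a \<in> borel_measurable borel"
    unfolding exp_delay_def[abs_def] by measurable
  moreover have "0 \<le> exp_delay l a t \<and> exp_delay l a t \<le> 1" for t
    unfolding exp_delay_def using a integrable_exp_dist_causal[OF l a]
    by (auto intro!: integral_nonneg_AE integral_le_const simp: causal_probD)
  moreover have "exp_delay l a t = 0" if "t < 0" for t
  proof -
    have "(\<lambda>u. exponential_density l u * a (t - u)) = (\<lambda>u. 0)"
      using causal_probD(4)[OF a] that by (force simp: exponential_density_def)
    then show ?thesis by (simp add: exp_delay_eq_lborel[OF l])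
  qed
  ultimately show ?thesis by (simp add: causal_prob_def)
qed

lemma causal_prob_mixture:
  fixes p :: "'s::finite pmf"
  assumes "\<And>y. causal_prob (h y)"
  shows "causal_prob (\<lambda>\<tau>. \<Sum>y\<in>UNIV. pmf p y * h y \<tau>)"
proof -
  note h = causal_probD[OF assms]
  have "(\<Sum>y\<in>UNIV. pmf p y * h y \<tau>) \<le> (\<Sum>y\<in>UNIV. pmf p y)" for \<tau>
    using h by (intro sum_mono mult_right_le_one_le) auto
  then show ?thesis
    using h by (auto simp: causal_prob_def sum_pmf_eq_1 intro: sum_nonneg)
qed

section \<open>Sums of independent exponential sojourn times\<close>

lemma emeasure_PiM_sum_le_shift:
  fixes M :: "nat \<Rightarrow> real measure"
  assumes M: "\<And>i. prob_space (M i)" and sets_M [measurable_cong]: "\<And>i. sets (M i) = sets borel"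
  shows "emeasure (PiM (Suc ` {..<n}) M) {x \<in> space (PiM (Suc ` {..<n}) M). (\<Sum>i<n. x (Suc i)) \<le> s}
    = emeasure (PiM {..<n} (\<lambda>i. M (Suc i))) {x \<in> space (PiM {..<n} (\<lambda>i. M (Suc i))). (\<Sum>i<n. x i) \<le> s}"
proof -
  define shift where "shift x = (\<lambda>i\<in>{..<n}. x (Suc i))" for x :: "nat \<Rightarrow> real"
  have shift [measurable]: "shift \<in> measurable (PiM (Suc ` {..<n}) M) (PiM {..<n} (\<lambda>i. M (Suc i)))"
    unfolding shift_def by measurable
  have distr_shift: "distr (PiM (Suc ` {..<n}) M) (PiM {..<n} (\<lambda>i. M (Suc i))) shift = PiM {..<n} (\<lambda>i. M (Suc i))"
    unfolding shift_def by (rule distr_PiM_reindex) (auto simp: M)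
  have "{x \<in> space (PiM {..<n} (\<lambda>i. M (Suc i))). (\<Sum>i<n. x i) \<le> s} \<in> sets (PiM {..<n} (\<lambda>i. M (Suc i)))"
    by measurable
  then have "emeasure (PiM {..<n} (\<lambda>i. M (Suc i))) {x \<in> space (PiM {..<n} (\<lambda>i. M (Suc i))). (\<Sum>i<n. x i) \<le> s}
      = emeasure (PiM (Suc ` {..<n}) M)
          (shift -` {x \<in> space (PiM {..<n} (\<lambda>i. M (Suc i))). (\<Sum>i<n. x i) \<le> s} \<inter> space (PiM (Suc ` {..<n}) M))"
    by (subst distr_shift[symmetric]) (rule emeasure_distr[OF shift])
  also have "shift -` {x \<in> space (PiM {..<n} (\<lambda>i. M (Suc i))). (\<Sum>i<n. x i) \<le> s} \<inter> space (PiM (Suc ` {..<n}) M)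
      = {x \<in> space (PiM (Suc ` {..<n}) M). (\<Sum>i<n. x (Suc i)) \<le> s}"
    using measurable_space[OF shift] by (auto simp: shift_def)
  finally show ?thesis ..
qed

lemma emeasure_PiM_sum_le_Suc:
  fixes M :: "nat \<Rightarrow> real measure"
  assumes M: "\<And>i. prob_space (M i)" and sets_M [measurable_cong]: "\<And>i. sets (M i) = sets borel"
  shows "emeasure (PiM {..<Suc n} M) {x \<in> space (PiM {..<Suc n} M). (\<Sum>i<Suc n. x i) \<le> t}
    = (\<integral>\<^sup>+ y. emeasure (PiM {..<n} (\<lambda>i. M (Suc i)))
         {x \<in> space (PiM {..<n} (\<lambda>i. M (Suc i))). (\<Sum>i<n. x i) \<le> t - y} \<partial>M 0)"
proof -
  interpret product_prob_space M
    using M by (auto simp: product_prob_space_def product_prob_space_axioms_def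
        product_sigma_finite_def intro: prob_space_imp_sigma_finite)
  define J where "J = Suc ` {..<n}"
  have J: "finite J" "0 \<notin> J" "{..<Suc n} = insert 0 J"
    unfolding J_def by (auto simp: lessThan_Suc_eq_insert_0)
  define A where "A = {x \<in> space (PiM {..<Suc n} M). (\<Sum>i<Suc n. x i) \<le> t}"
  have slice: "(\<integral>\<^sup>+ x. indicator A (x(0 := y)) \<partial>PiM J M)
      = emeasure (PiM {..<n} (\<lambda>i. M (Suc i))) {x \<in> space (PiM {..<n} (\<lambda>i. M (Suc i))). (\<Sum>i<n. x i) \<le> t - y}"
    for y
  proof -
    have "(\<integral>\<^sup>+ x. indicator A (x(0 := y)) \<partial>PiM J M)
        = (\<integral>\<^sup>+ x. indicator {x \<in> space (PiM J M). (\<Sum>i<n. x (Suc i)) \<le> t - y} x \<partial>PiM J M)"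
    proof (rule nn_integral_cong)
      fix x assume x: "x \<in> space (PiM J M)"
      have "x(0 := y) \<in> space (PiM {..<Suc n} M)"
        using x J sets_eq_imp_space_eq[OF sets_M] by (auto simp: space_PiM PiE_iff extensional_def)
      moreover have "(\<Sum>i<Suc n. (x(0 := y)) i) = y + (\<Sum>i<n. x (Suc i))"
        by (subst sum.lessThan_Suc_shift) simp
      ultimately show "indicator A (x(0 := y)) = indicator {x \<in> space (PiM J M). (\<Sum>i<n. x (Suc i)) \<le> t - y} x"
        using x by (auto simp: A_def indicator_def)
    qed
    then show ?thesis
      unfolding J_def by (simp add: emeasure_PiM_sum_le_shift[of M, OF M sets_M])
  qed
  have "A \<in> sets (PiM (insert 0 J) M)"
    unfolding A_def J(3)[symmetric] by measurable
  then have "emeasure (PiM {..<Suc n} M) A = (\<integral>\<^sup>+ y. (\<integral>\<^sup>+ x. indicator A (x(0 := y)) \<partial>PiM J M) \<partial>M 0)"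
    unfolding J(3) by (simp add: product_nn_integral_insert_rev[OF J(1,2)] flip: nn_integral_indicator)
  also have "\<dots> = (\<integral>\<^sup>+ y. emeasure (PiM {..<n} (\<lambda>i. M (Suc i)))
         {x \<in> space (PiM {..<n} (\<lambda>i. M (Suc i))). (\<Sum>i<n. x i) \<le> t - y} \<partial>M 0)"
    unfolding slice ..
  finally show ?thesis
    unfolding A_def .
qed

definition exp_sum_cdf :: "(nat \<Rightarrow> real) \<Rightarrow> nat \<Rightarrow> real \<Rightarrow> real" where
  "exp_sum_cdf r n t = measure (PiM {..<n} (\<lambda>i. exp_dist (r i)))
     {x \<in> space (PiM {..<n} (\<lambda>i. exp_dist (r i))). (\<Sum>i<n. x i) \<le> t}"

lemma exp_sum_cdf_0: "exp_sum_cdf r 0 t = (if 0 \<le> t then 1 else 0)"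
  unfolding exp_sum_cdf_def by (auto simp: PiM_empty space_PiM)

lemma exp_sum_cdf_Suc:
  assumes r: "\<And>i. 0 < r i"
  shows "exp_sum_cdf r (Suc n) t = exp_delay (r 0) (exp_sum_cdf (\<lambda>i. r (Suc i)) n) t"
proof -
  let ?M = "\<lambda>i. exp_dist (r i)"
  interpret P: prob_space "PiM {..<Suc n} ?M"
    using r by (intro prob_space_PiM prob_space_exponential_density)
  interpret P': prob_space "PiM {..<n} (\<lambda>i. ?M (Suc i))"
    using r by (intro prob_space_PiM prob_space_exponential_density)
  have "mono (exp_sum_cdf (\<lambda>i. r (Suc i)) n)"
    unfolding mono_def exp_sum_cdf_def by (auto intro!: P'.finite_measure_mono)
  then have [measurable]: "exp_sum_cdf (\<lambda>i. r (Suc i)) n \<in> borel_measurable borel"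
    by (rule borel_measurable_mono)
  have nonneg: "0 \<le> exp_sum_cdf (\<lambda>i. r (Suc i)) n \<tau>" and bounded: "\<bar>exp_sum_cdf (\<lambda>i. r (Suc i)) n \<tau>\<bar> \<le> 1" for \<tau>
    by (simp_all add: exp_sum_cdf_def)
  have "ennreal (exp_sum_cdf r (Suc n) t)
      = (\<integral>\<^sup>+ y. ennreal (exp_sum_cdf (\<lambda>i. r (Suc i)) n (t - y)) \<partial>exp_dist (r 0))"
    unfolding exp_sum_cdf_def P.emeasure_eq_measure[symmetric] P'.emeasure_eq_measure[symmetric]
    using r by (intro emeasure_PiM_sum_le_Suc prob_space_exponential_density) auto
  also have "\<dots> = ennreal (exp_delay (r 0) (exp_sum_cdf (\<lambda>i. r (Suc i)) n) t)"
    unfolding exp_delay_def using r bounded nonneg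
    by (intro nn_integral_eq_integral integrable_exp_dist_shift) auto
  finally show ?thesis
    unfolding exp_delay_def by (simp add: exp_sum_cdf_def integral_nonneg_AE)
qed

lemma causal_prob_exp_sum_cdf:
  assumes "\<And>i. 0 < r i"
  shows "causal_prob (exp_sum_cdf r n)"
  using assms
proof (induction n arbitrary: r)
  case 0
  then show ?case by (simp add: causal_prob_def exp_sum_cdf_0[abs_def])
next
  case (Suc n)
  have "exp_sum_cdf r (Suc n) = exp_delay (r 0) (exp_sum_cdf (\<lambda>i. r (Suc i)) n)"
    using exp_sum_cdf_Suc[OF Suc.prems] by (rule ext)
  then show ?case
    using Suc by (simp add: causal_prob_exp_delay)
qed

section \<open>Comparing exponential delays\<close>

lemma exp_delay_diff_le_integral:
  assumes l: "0 < l" "0 < l'" and t: "0 \<le> t" and a: "causal_prob a" and b: "causal_prob b"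
    and k: "continuous_on {0..t} k"
    and pointwise: "\<And>u. 0 \<le> u \<Longrightarrow> u \<le> t \<Longrightarrow>
      exponential_density l u * a (t - u) - exponential_density l' u * b (t - u) \<le> k u"
  shows "exp_delay l a t - exp_delay l' b t \<le> integral {0..t} k"
proof -
  have [measurable]: "a \<in> borel_measurable borel" "b \<in> borel_measurable borel"
    using a b by (simp_all add: causal_probD)
  have bounded: "\<bar>a \<tau>\<bar> \<le> 1" "\<bar>b \<tau>\<bar> \<le> 1" for \<tau>
    using a b by (simp_all add: causal_probD abs_le_iff)
  have int_a: "integrable lborel (\<lambda>u. exponential_density l u * a (t - u))"
    by (rule integrable_exponential_density_shift[OF l(1) _ bounded(1)]) simp
  have int_b: "integrable lborel (\<lambda>u. exponential_density l' u * b (t - u))"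
    by (rule integrable_exponential_density_shift[OF l(2) _ bounded(2)]) simp
  have int_k: "integrable lborel (\<lambda>u. indicator {0..t} u * k u)"
    using borel_integrable_compact[OF compact_Icc k] by simp
  have "exp_delay l a t - exp_delay l' b t
      = (\<integral>u. exponential_density l u * a (t - u) - exponential_density l' u * b (t - u) \<partial>lborel)"
    using int_a int_b l by (simp add: exp_delay_eq_lborel)
  also have "\<dots> \<le> (\<integral>u. indicator {0..t} u * k u \<partial>lborel)"
  proof (rule integral_mono[OF _ int_k])
    show "integrable lborel (\<lambda>u. exponential_density l u * a (t - u) - exponential_density l' u * b (t - u))"
      using int_a int_b by simp
    show "exponential_density l u * a (t - u) - exponential_density l' u * b (t - u)
        \<le> indicator {0..t} u * k u" for u
      using pointwise[of u] causal_probD(4)[OF a, of "t - u"] causal_probD(4)[OF b, of "t - u"]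
      by (cases "u < 0"; cases "u \<le> t") (auto simp: exponential_density_def)
  qed
  also have "\<dots> = integral {0..t} k"
    using set_borel_integral_eq_integral(2)[of "{0..t}" k] int_k
    by (simp add: set_integrable_def set_lebesgue_integral_def)
  finally show ?thesis .
qed

text \<open>The pointwise bounds below are dominated by this majorant, whose integral over the first
  sojourn time is again the bound \<open>1 - exp (- c t)\<close>: this is what makes the induction on the
  number of jumps close.\<close>

lemma integral_delay_majorant:
  fixes l c t :: real
  assumes "0 \<le> t"
  shows "integral {0..t} (\<lambda>u. exp (- u * l) * (l - (l - c) * exp (- c * (t - u)))) = 1 - exp (- c * t)"
proof -
  define K where "K u = exp (- c * t - (l - c) * u) - exp (- u * l)" for u
  have split: "exp (- u * l) * (l - (l - c) * exp (- c * (t - u)))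
      = l * exp (- u * l) - (l - c) * exp (- c * t - (l - c) * u)" for u
    by (simp add: algebra_simps flip: exp_add)
  have "(K has_real_derivative l * exp (- u * l) - (l - c) * exp (- c * t - (l - c) * u)) (at u within {0..t})" for u
    unfolding K_def by (auto intro!: derivative_eq_intros simp: algebra_simps)
  then have "((\<lambda>u. exp (- u * l) * (l - (l - c) * exp (- c * (t - u)))) has_integral K t - K 0) {0..t}"
    unfolding split using assms
    by (intro fundamental_theorem_of_calculus) (auto simp: has_real_derivative_iff_has_vector_derivative)
  moreover have "K t - K 0 = 1 - exp (- c * t)"
    unfolding K_def by (simp add: algebra_simps)
  ultimately show ?thesis by (simp add: integral_unique)
qed

lemma integral_exponential_density_Icc:
  fixes l C t :: real
  assumes "0 \<le> t"
  shows "integral {0..t} (\<lambda>u. l * exp (- u * l) * C) = (1 - exp (- t * l)) * C"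
proof -
  have "((\<lambda>u. - exp (- u * l) * C) has_real_derivative l * exp (- u * l) * C) (at u within {0..t})" for u
    by (auto intro!: derivative_eq_intros)
  then have "((\<lambda>u. l * exp (- u * l) * C) has_integral (- exp (- t * l) * C) - (- exp (- 0 * l) * C)) {0..t}"
    using assms
    by (intro fundamental_theorem_of_calculus) (auto simp: has_real_derivative_iff_has_vector_derivative)
  from integral_unique[OF this] show ?thesis by (simp add: algebra_simps)
qed

lemma exponential_density_diff_le_same_rate:
  fixes A B :: real
  assumes l: "0 < l" "l * \<epsilon> \<le> c" and u: "0 \<le> u"
    and AB: "A - B \<le> 1 - (1 - \<epsilon>) * exp (- c * (t - u))"
  shows "exponential_density l u * A - exponential_density l u * B
    \<le> exp (- u * l) * (l - (l - c) * exp (- c * (t - u)))"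
proof -
  define X where "X = exp (- c * (t - u))"
  have "l * (A - B) \<le> l * (1 - (1 - \<epsilon>) * X)"
    using AB l by (intro mult_left_mono) (auto simp: X_def)
  also have "\<dots> \<le> l - (l - c) * X"
    using l by (auto simp: X_def algebra_simps intro!: mult_right_mono)
  finally have "exp (- u * l) * (l * (A - B)) \<le> exp (- u * l) * (l - (l - c) * X)"
    by (rule mult_left_mono) simp
  then show ?thesis
    using u by (simp add: exponential_density_def X_def algebra_simps)
qed

lemma exponential_density_diff_le_slower:
  fixes A B :: real
  assumes l: "0 < l" "l \<le> l'" "l' - l \<le> c" and u: "0 \<le> u"
    and A: "0 \<le> A" "A \<le> 1" and B: "0 \<le> B" and AB: "A - B \<le> 1 - exp (- c * (t - u))"
  shows "exponential_density l u * A - exponential_density l' u * B \<le> l * exp (- u * l) * (1 - exp (- c * t))"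
proof -
  define Z X where "Z = exp (- (l' - l) * u)" and "X = exp (- c * (t - u))"
  have "(l - l') * u \<le> 0"
    using l u by (intro mult_nonpos_nonneg) auto
  then have Z: "0 < Z" "Z \<le> 1"
    by (auto simp: Z_def algebra_simps)
  have "(l' - l) * u \<le> c * u"
    using l u by (intro mult_right_mono) auto
  then have "exp (- c * t) \<le> Z * X"
    by (simp add: Z_def X_def algebra_simps flip: exp_add)
  moreover have "Z * (A - 1 + X) \<le> Z * B"
    using AB Z by (intro mult_left_mono) (auto simp: X_def)
  moreover have "A * (1 - Z) \<le> 1 - Z"
    using A Z by (intro mult_left_le_one_le) auto
  ultimately have "A - Z * B \<le> 1 - exp (- c * t)"
    by (simp add: algebra_simps)
  then have "l * (A - Z * B) \<le> l * (1 - exp (- c * t))"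
    using l by (intro mult_left_mono) auto
  moreover have "l * A - l' * Z * B \<le> l * (A - Z * B)"
    using l Z B by (simp add: right_diff_distrib mult_right_mono mult.assoc)
  ultimately have "exp (- u * l) * (l * A - l' * Z * B) \<le> exp (- u * l) * (l * (1 - exp (- c * t)))"
    by (intro mult_left_mono) auto
  moreover have "exp (- u * l') = exp (- u * l) * Z"
    by (simp add: Z_def algebra_simps flip: exp_add)
  ultimately show ?thesis
    using u by (simp add: exponential_density_def algebra_simps)
qed

lemma exponential_density_diff_le_faster:
  fixes A B :: real
  assumes l: "0 < l'" "l' < l" "l - l' \<le> c" and u: "0 \<le> u"
    and A: "0 \<le> A" "A \<le> 1" and B: "0 \<le> B" and AB: "A - B \<le> 1 - exp (- c * (t - u))"
  shows "exponential_density l u * A - exponential_density l' u * B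
    \<le> exp (- u * l) * (l - (l - c) * exp (- c * (t - u)))"
proof -
  define Z X where "Z = exp (- (l - l') * u)" and "X = exp (- c * (t - u))"
  have "(l' - l) * u \<le> 0"
    using l u by (intro mult_nonpos_nonneg) auto
  then have Z: "0 < Z" "Z \<le> 1"
    by (auto simp: Z_def algebra_simps)
  have "l * Z * A = l' * Z * A + (l - l') * Z * A"
    by (simp add: algebra_simps)
  also have "\<dots> \<le> l' * Z * (B + 1 - X) + (l - l') * Z"
    using l Z A AB by (intro add_mono mult_left_mono mult_right_le_one_le) (auto simp: X_def)
  also have "\<dots> = l' * B * Z + Z * (l - l' * X)"
    by (simp add: algebra_simps)
  also have "\<dots> \<le> l' * B + Z * (l - l' * X)"
    using l Z B by (intro add_right_mono mult_right_le_one_le) auto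
  also have "\<dots> \<le> l' * B + Z * (l - (l - c) * X)"
    using l Z by (intro add_left_mono mult_left_mono diff_left_mono mult_right_mono) (auto simp: X_def)
  finally have "exp (- u * l') * (l * Z * A - l' * B) \<le> exp (- u * l') * (Z * (l - (l - c) * X))"
    by (intro mult_left_mono) auto
  moreover have "exp (- u * l) = exp (- u * l') * Z"
    by (simp add: Z_def algebra_simps flip: exp_add)
  ultimately show ?thesis
    using u by (simp add: exponential_density_def X_def algebra_simps)
qed

lemma exp_delay_diff_le_same_rate:
  assumes l: "0 < l" "l * \<epsilon> \<le> c" and t: "0 \<le> t" and a: "causal_prob a" and b: "causal_prob b"
    and ab: "\<And>\<tau>. 0 \<le> \<tau> \<Longrightarrow> a \<tau> - b \<tau> \<le> 1 - (1 - \<epsilon>) * exp (- c * \<tau>)"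
  shows "exp_delay l a t - exp_delay l b t \<le> 1 - exp (- c * t)"
proof -
  have "exp_delay l a t - exp_delay l b t
      \<le> integral {0..t} (\<lambda>u. exp (- u * l) * (l - (l - c) * exp (- c * (t - u))))"
    using l ab by (intro exp_delay_diff_le_integral[OF l(1) l(1) t a b] continuous_intros
        exponential_density_diff_le_same_rate) auto
  also have "\<dots> = 1 - exp (- c * t)"
    by (rule integral_delay_majorant[OF t])
  finally show ?thesis .
qed

lemma exp_delay_diff_le_close_rates:
  assumes l: "0 < l" "0 < l'" "\<bar>l - l'\<bar> \<le> c" and t: "0 \<le> t"
    and a: "causal_prob a" and b: "causal_prob b"
    and ab: "\<And>\<tau>. 0 \<le> \<tau> \<Longrightarrow> a \<tau> - b \<tau> \<le> 1 - exp (- c * \<tau>)"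
  shows "exp_delay l a t - exp_delay l' b t \<le> 1 - exp (- c * t)"
proof (cases "l \<le> l'")
  case True
  have "exp_delay l a t - exp_delay l' b t \<le> integral {0..t} (\<lambda>u. l * exp (- u * l) * (1 - exp (- c * t)))"
    using True l a b ab by (intro exp_delay_diff_le_integral[OF l(1,2) t a b] continuous_intros
        exponential_density_diff_le_slower) (auto simp: causal_probD)
  also have "\<dots> = (1 - exp (- t * l)) * (1 - exp (- c * t))"
    by (rule integral_exponential_density_Icc[OF t])
  also have "\<dots> \<le> 1 - exp (- c * t)"
    using l t by (intro mult_left_le_one_le) (auto simp: mult_nonneg_nonneg)
  finally show ?thesis .
next
  case False
  have "exp_delay l a t - exp_delay l' b t
      \<le> integral {0..t} (\<lambda>u. exp (- u * l) * (l - (l - c) * exp (- c * (t - u))))"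
    using False l a b ab by (intro exp_delay_diff_le_integral[OF l(1,2) t a b] continuous_intros
        exponential_density_diff_le_faster) (auto simp: causal_probD)
  also have "\<dots> = 1 - exp (- c * t)"
    by (rule integral_delay_majorant[OF t])
  finally show ?thesis .
qed

section \<open>Transferring bounds along a relation between jump distributions\<close>

lemma integral_prob_pmf_eq_sum:
  fixes p :: "'s::finite pmf" and B :: "'s \<Rightarrow> real set"
  assumes "\<And>y. B y \<in> sets borel" "\<And>y. B y \<subseteq> {a..b}"
  shows "integrable lborel (\<lambda>c. measure_pmf.prob p {y. c \<in> B y})"
    and "(\<integral>c. measure_pmf.prob p {y. c \<in> B y} \<partial>lborel) = (\<Sum>y\<in>UNIV. pmf p y * measure lborel (B y))"
proof -
  have prob_eq: "(\<lambda>c. measure_pmf.prob p {y. c \<in> B y}) = (\<lambda>c. \<Sum>y\<in>UNIV. pmf p y * indicator (B y) c)"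
    by (simp add: measure_measure_pmf_finite sum.If_cases indicator_def)
  have "emeasure lborel (B y) \<le> emeasure lborel {a..b}" for y
    using assms by (intro emeasure_mono) auto
  also have "emeasure lborel {a..b} < \<infinity>"
    by (rule emeasure_compact_finite) simp
  finally have int: "integrable lborel (indicator (B y) :: real \<Rightarrow> real)" for y
    using assms(1) by (simp add: integrable_indicator_iff)
  then show "integrable lborel (\<lambda>c. measure_pmf.prob p {y. c \<in> B y})"
    unfolding prob_eq by (intro Bochner_Integration.integrable_sum integrable_mult_right int)
  show "(\<integral>c. measure_pmf.prob p {y. c \<in> B y} \<partial>lborel) = (\<Sum>y\<in>UNIV. pmf p y * measure lborel (B y))"
    unfolding prob_eq using int by (subst Bochner_Integration.integral_sum) auto
qed

text \<open>Layer cake: the excess of \<open>h\<close> over \<open>D\<close> is the integral of \<open>p{h > c}\<close> over \<open>c \<in> [D, 1]\<close>, and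
  the transfer inequality bounds each layer \<open>p{h > c}\<close> by \<open>p'{h > c - D} + \<epsilon>\<close>.\<close>

lemma excess_le_transfer:
  fixes p p' :: "'s::finite pmf" and h :: "'s \<Rightarrow> real"
  assumes h: "\<And>y. 0 \<le> h y" "\<And>y. h y \<le> 1" and D: "0 \<le> D" "D \<le> 1" and \<epsilon>: "0 \<le> \<epsilon>"
    and lip: "\<And>y y'. (y, y') \<in> R \<Longrightarrow> h y \<le> h y' + D"
    and transfer: "\<And>A. measure_pmf.prob p A \<le> measure_pmf.prob p' (R `` A) + \<epsilon>"
  shows "(\<Sum>y\<in>UNIV. pmf p y * max 0 (h y - D)) \<le> (\<Sum>y\<in>UNIV. pmf p' y * min (h y) (1 - D)) + \<epsilon> * (1 - D)"
proof -
  define B B' where "B y = {D..<h y}" and "B' y = {D..<min 1 (h y + D)}" for y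
  have B: "B y \<subseteq> {D..1}" "B' y \<subseteq> {D..1}" for y
    using h by (auto simp: B_def B'_def) (meson h(2) less_imp_le order_trans)
  have measure_B: "measure lborel (B y) = max 0 (h y - D)" for y
    by (cases "D \<le> h y") (auto simp: B_def)
  have measure_B': "measure lborel (B' y) = min (h y) (1 - D)" for y
    using h[of y] D by (auto simp: B'_def min_def)
  have int_indicator: "integrable lborel (\<lambda>c. \<epsilon> * indicator {D..<1} c :: real)"
    using D by (auto simp: integrable_indicator_iff emeasure_lborel_Ico)
  have "B y \<in> sets borel" "B' y \<in> sets borel" for y
    by (simp_all add: B_def B'_def)
  note layer = integral_prob_pmf_eq_sum[of B, OF this(1) B(1)] integral_prob_pmf_eq_sum[of B', OF this(2) B(2)]
  have "(\<Sum>y\<in>UNIV. pmf p y * max 0 (h y - D)) = (\<integral>c. measure_pmf.prob p {y. c \<in> B y} \<partial>lborel)"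
    using layer by (simp add: measure_B)
  also have "\<dots> \<le> (\<integral>c. measure_pmf.prob p' {y. c \<in> B' y} + \<epsilon> * indicator {D..<1} c \<partial>lborel)"
  proof (rule integral_mono)
    show "integrable lborel (\<lambda>c. measure_pmf.prob p {y. c \<in> B y})"
      using layer by simp
    show "integrable lborel (\<lambda>c. measure_pmf.prob p' {y. c \<in> B' y} + \<epsilon> * indicator {D..<1} c)"
      using layer int_indicator by simp
    fix c :: real
    show "measure_pmf.prob p {y. c \<in> B y} \<le> measure_pmf.prob p' {y. c \<in> B' y} + \<epsilon> * indicator {D..<1} c"
    proof (cases "D \<le> c \<and> c < 1")
      case True
      have "measure_pmf.prob p {y. c \<in> B y} \<le> measure_pmf.prob p' (R `` {y. c < h y}) + \<epsilon>"
        using True transfer by (simp add: B_def)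
      also have "measure_pmf.prob p' (R `` {y. c < h y}) \<le> measure_pmf.prob p' {y. c \<in> B' y}"
        using True lip by (intro measure_pmf.finite_measure_mono) (force simp: B'_def)+
      finally show ?thesis using True by simp
    next
      case False
      then have "c \<notin> B y" for y
        using h(2)[of y] by (auto simp: B_def)
      then show ?thesis using \<epsilon> by simp
    qed
  qed
  also have "\<dots> = (\<Sum>y\<in>UNIV. pmf p' y * min (h y) (1 - D)) + \<epsilon> * (1 - D)"
    using layer int_indicator D by (simp add: measure_B')
  finally show ?thesis .
qed

lemma expectation_le_transfer:
  fixes p p' :: "'s::finite pmf" and h :: "'s \<Rightarrow> real"
  assumes h: "\<And>y. 0 \<le> h y" "\<And>y. h y \<le> 1" and D: "0 \<le> D" "D \<le> 1" and \<epsilon>: "0 \<le> \<epsilon>"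
    and lip: "\<And>y y'. (y, y') \<in> R \<Longrightarrow> h y \<le> h y' + D"
    and transfer: "\<And>A. measure_pmf.prob p A \<le> measure_pmf.prob p' (R `` A) + \<epsilon>"
  shows "(\<Sum>y\<in>UNIV. pmf p y * h y) \<le> (\<Sum>y\<in>UNIV. pmf p' y * h y) + D + \<epsilon> * (1 - D)"
proof -
  have split: "pmf p y * h y = pmf p y * min (h y) D + pmf p y * max 0 (h y - D)" for y
    by (simp add: min_def max_def algebra_simps)
  have "(\<Sum>y\<in>UNIV. pmf p y * h y) = (\<Sum>y\<in>UNIV. pmf p y * min (h y) D) + (\<Sum>y\<in>UNIV. pmf p y * max 0 (h y - D))"
    by (simp only: split sum.distrib)
  also have "(\<Sum>y\<in>UNIV. pmf p y * min (h y) D) \<le> (\<Sum>y\<in>UNIV. pmf p y * D)"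
    by (intro sum_mono mult_left_mono) auto
  also have "\<dots> = D"
    by (simp add: sum_pmf_eq_1 flip: sum_distrib_right)
  also have "(\<Sum>y\<in>UNIV. pmf p y * max 0 (h y - D)) \<le> (\<Sum>y\<in>UNIV. pmf p' y * min (h y) (1 - D)) + \<epsilon> * (1 - D)"
    by (rule excess_le_transfer[OF h D \<epsilon> lip transfer])
  also have "(\<Sum>y\<in>UNIV. pmf p' y * min (h y) (1 - D)) \<le> (\<Sum>y\<in>UNIV. pmf p' y * h y)"
    by (intro sum_mono mult_left_mono) auto
  finally show ?thesis by simp
qed

lemma exp_delay_mixture_diff_le_same_rate:
  fixes p p' :: "'s::finite pmf"
  assumes l: "0 < l" "l \<le> q" and \<epsilon>: "0 \<le> \<epsilon>" and t: "0 \<le> t"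
    and transfer: "\<And>A. measure_pmf.prob p A \<le> measure_pmf.prob p' (R `` A) + \<epsilon>"
    and h: "\<And>y. causal_prob (h y)"
    and lip: "\<And>y y' \<tau>. (y, y') \<in> R \<Longrightarrow> 0 \<le> \<tau> \<Longrightarrow> h y \<tau> - h y' \<tau> \<le> 1 - exp (- (q * \<epsilon>) * \<tau>)"
  shows "exp_delay l (\<lambda>\<tau>. \<Sum>y\<in>UNIV. pmf p y * h y \<tau>) t - exp_delay l (\<lambda>\<tau>. \<Sum>y\<in>UNIV. pmf p' y * h y \<tau>) t
    \<le> 1 - exp (- (q * \<epsilon>) * t)"
proof (rule exp_delay_diff_le_same_rate[OF l(1) _ t causal_prob_mixture[OF h] causal_prob_mixture[OF h]])
  show "l * \<epsilon> \<le> q * \<epsilon>"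
    using l \<epsilon> by (intro mult_right_mono) auto
  fix \<tau> :: real assume \<tau>: "0 \<le> \<tau>"
  define D where "D = 1 - exp (- (q * \<epsilon>) * \<tau>)"
  have D: "0 \<le> D" "D \<le> 1"
    using l \<epsilon> \<tau> by (auto simp: D_def)
  have "(\<Sum>y\<in>UNIV. pmf p y * h y \<tau>) \<le> (\<Sum>y\<in>UNIV. pmf p' y * h y \<tau>) + D + \<epsilon> * (1 - D)"
  proof (rule expectation_le_transfer[OF _ _ D \<epsilon> _ transfer])
    show "0 \<le> h y \<tau>" "h y \<tau> \<le> 1" for y
      using h by (simp_all add: causal_probD)
    show "h y \<tau> \<le> h y' \<tau> + D" if "(y, y') \<in> R" for y y'
      using lip[OF that \<tau>] by (simp add: D_def)
  qed
  then show "(\<Sum>y\<in>UNIV. pmf p y * h y \<tau>) - (\<Sum>y\<in>UNIV. pmf p' y * h y \<tau>) \<le> 1 - (1 - \<epsilon>) * exp (- (q * \<epsilon>) * \<tau>)"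
    by (simp add: D_def algebra_simps)
qed

lemma exp_delay_mixture_diff_le_close_rates:
  fixes p p' :: "'s::finite pmf"
  assumes l: "0 < l" "0 < l'" "\<bar>l - l'\<bar> \<le> c" and t: "0 \<le> t"
    and transfer: "\<And>A. measure_pmf.prob p A \<le> measure_pmf.prob p' (R `` A)"
    and h: "\<And>y. causal_prob (h y)"
    and lip: "\<And>y y' \<tau>. (y, y') \<in> R \<Longrightarrow> 0 \<le> \<tau> \<Longrightarrow> h y \<tau> - h y' \<tau> \<le> 1 - exp (- c * \<tau>)"
  shows "exp_delay l (\<lambda>\<tau>. \<Sum>y\<in>UNIV. pmf p y * h y \<tau>) t - exp_delay l' (\<lambda>\<tau>. \<Sum>y\<in>UNIV. pmf p' y * h y \<tau>) t
    \<le> 1 - exp (- c * t)"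
proof (rule exp_delay_diff_le_close_rates[OF l t causal_prob_mixture[OF h] causal_prob_mixture[OF h]])
  fix \<tau> :: real assume \<tau>: "0 \<le> \<tau>"
  define D where "D = 1 - exp (- c * \<tau>)"
  have D: "0 \<le> D" "D \<le> 1"
    using l \<tau> by (auto simp: D_def)
  have "(\<Sum>y\<in>UNIV. pmf p y * h y \<tau>) \<le> (\<Sum>y\<in>UNIV. pmf p' y * h y \<tau>) + D + 0 * (1 - D)"
  proof (rule expectation_le_transfer[OF _ _ D order_refl])
    show "0 \<le> h y \<tau>" "h y \<tau> \<le> 1" for y
      using h by (simp_all add: causal_probD)
    show "h y \<tau> \<le> h y' \<tau> + D" if "(y, y') \<in> R" for y y'
      using lip[OF that \<tau>] by (simp add: D_def)
    show "measure_pmf.prob p A \<le> measure_pmf.prob p' (R `` A) + 0" for A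
      using transfer by simp
  qed
  then show "(\<Sum>y\<in>UNIV. pmf p y * h y \<tau>) - (\<Sum>y\<in>UNIV. pmf p' y * h y \<tau>) \<le> 1 - exp (- c * \<tau>)"
    by (simp add: D_def)
qed

lemma abs_diff_le_of_abs_ln_diff_le:
  fixes a b q \<delta> :: real
  assumes "0 < a" "0 < b" "a \<le> q" "b \<le> q" "\<bar>ln a - ln b\<bar> \<le> \<delta>"
  shows "\<bar>a - b\<bar> \<le> q * (exp \<delta> - 1)"
proof -
  have one_sided: "x - y \<le> q * (exp \<delta> - 1)" if "0 < x" "0 < y" "y \<le> q" "ln x - ln y \<le> \<delta>" for x y
  proof -
    have "x \<le> exp (ln y + \<delta>)"
      using that by (metis add.commute diff_le_eq exp_le_cancel_iff exp_ln)
    then have "x - y \<le> y * (exp \<delta> - 1)"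
      using that by (simp add: exp_add algebra_simps)
    also have "\<dots> \<le> q * (exp \<delta> - 1)"
      using that assms(5) by (intro mult_right_mono) auto
    finally show ?thesis .
  qed
  show ?thesis
    using one_sided[of a b] one_sided[of b a] assms by (auto simp: abs_le_iff)
qed

lemma eps_delta_bisimD:
  assumes "eps_delta_bisim P E L \<epsilon> \<delta> R" "(x, y) \<in> R"
  shows "L x = L y" "\<bar>ln (E x) - ln (E y)\<bar> \<le> \<delta>"
    "\<And>A. measure_pmf.prob (P x) A \<le> measure_pmf.prob (P y) (R `` A) + \<epsilon>"
  using assms unfolding eps_delta_bisim_def by auto

lemma eps_delta_bisim_sym: "eps_delta_bisim P E L \<epsilon> \<delta> R \<Longrightarrow> sym R"
  by (simp add: eps_delta_bisim_def)

lemma eps_delta_bisim_goal_iff: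
  assumes "standing_assm P L g" "eps_delta_bisim P E L \<epsilon> \<delta> R" "(x, y) \<in> R"
  shows "x = g \<longleftrightarrow> y = g"
  using assms(1) eps_delta_bisimD(1)[OF assms(2,3)] unfolding standing_assm_def by metis

lemma finite_first_hit_paths: "finite (first_hit_paths (x::'s::finite) g n)"
proof (rule finite_subset)
  show "first_hit_paths x g n \<subseteq> {xs. set xs \<subseteq> UNIV \<and> length xs = Suc n}"
    by (auto simp: first_hit_paths_def)
  show "finite {xs. set xs \<subseteq> (UNIV::'s set) \<and> length xs = Suc n}"
    by (rule finite_lists_length_eq) simp
qed

lemma first_hit_paths_0: "first_hit_paths x g 0 = (if x = g then {[x]} else {})"
proof -
  have "xs = [xs ! 0]" if "length xs = Suc 0" for xs :: "'a list"
    using that by (cases xs) auto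
  then show ?thesis by (auto simp: first_hit_paths_def)
qed

lemma first_hit_paths_goal_Suc: "first_hit_paths g g (Suc n) = {}"
  by (auto simp: first_hit_paths_def)

lemma first_hit_paths_Suc:
  assumes "x \<noteq> g"
  shows "first_hit_paths x g (Suc n) = (\<lambda>ys. x # ys) ` (\<Union>y. first_hit_paths y g n)"
proof safe
  fix xs assume xs: "xs \<in> first_hit_paths x g (Suc n)"
  then obtain ys where ys: "xs = x # ys"
    by (cases xs) (auto simp: first_hit_paths_def)
  have "ys \<in> first_hit_paths (ys ! 0) g n"
    using xs unfolding ys first_hit_paths_def by auto
  then show "xs \<in> (\<lambda>ys. x # ys) ` (\<Union>y. first_hit_paths y g n)"
    using ys by blast
next
  fix ys y assume "ys \<in> first_hit_paths y g n"
  then show "x # ys \<in> first_hit_paths x g (Suc n)"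
    using assms by (auto simp: first_hit_paths_def less_Suc_eq_0_disj)
qed

section \<open>First-jump decomposition of time-bounded reachability\<close>

locale goal_ctmc =
  fixes P :: "'s::finite \<Rightarrow> 's pmf" and E :: "'s \<Rightarrow> real" and g :: 's
  assumes ctmc: "ctmc P E"
begin

lemma rate_pos: "0 < E x"
  using ctmc by (simp add: ctmc_def)

lemma cyl_prob_eq: "cyl_prob P E n xs t = (\<Prod>i<n. pmf (P (xs ! i)) (xs ! Suc i)) * exp_sum_cdf (\<lambda>i. E (xs ! i)) n t"
  unfolding cyl_prob_def exp_sum_cdf_def ..

lemma causal_prob_cyl_prob: "causal_prob (cyl_prob P E n xs)"
  unfolding cyl_prob_eq[abs_def] using rate_pos
  by (intro causal_prob_cmult causal_prob_exp_sum_cdf prod_nonneg prod_le_1) (auto simp: pmf_le_1)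

lemma cyl_prob_Cons:
  "cyl_prob P E (Suc n) (x # ys) t = pmf (P x) (ys ! 0) * exp_delay (E x) (cyl_prob P E n ys) t"
proof -
  have "(\<Prod>i<Suc n. pmf (P ((x # ys) ! i)) ((x # ys) ! Suc i))
      = pmf (P x) (ys ! 0) * (\<Prod>i<n. pmf (P (ys ! i)) (ys ! Suc i))"
    by (subst prod.lessThan_Suc_shift) simp
  then show ?thesis
    using rate_pos by (simp add: cyl_prob_eq exp_sum_cdf_Suc exp_delay_cmult[symmetric] mult.assoc)
qed

definition first_hit_prob :: "nat \<Rightarrow> 's \<Rightarrow> real \<Rightarrow> real" where
  "first_hit_prob n x t = (\<Sum>xs\<in>first_hit_paths x g n. cyl_prob P E n xs t)"

definition reach_prob_upto :: "nat \<Rightarrow> 's \<Rightarrow> real \<Rightarrow> real" where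
  "reach_prob_upto N x t = (\<Sum>n<N. first_hit_prob n x t)"

lemma first_hit_prob_0: "first_hit_prob 0 x t = (if x = g \<and> 0 \<le> t then 1 else 0)"
  by (simp add: first_hit_prob_def first_hit_paths_0 cyl_prob_eq exp_sum_cdf_0)

lemma first_hit_prob_Suc:
  "first_hit_prob (Suc n) x t = (if x = g then 0 else
     exp_delay (E x) (\<lambda>\<tau>. \<Sum>y\<in>UNIV. pmf (P x) y * first_hit_prob n y \<tau>) t)"
proof (cases "x = g")
  case True
  then show ?thesis by (simp add: first_hit_prob_def first_hit_paths_goal_Suc)
next
  case False
  have integrable: "integrable (exp_dist (E x)) (\<lambda>u. pmf (P x) y * cyl_prob P E n ys (t - u))" for y ys
    by (intro integrable_mult_right integrable_exp_dist_causal rate_pos causal_prob_cyl_prob)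
  have "first_hit_prob (Suc n) x t = (\<Sum>ys\<in>(\<Union>y. first_hit_paths y g n). cyl_prob P E (Suc n) (x # ys) t)"
    unfolding first_hit_prob_def first_hit_paths_Suc[OF False]
    by (subst sum.reindex) (auto simp: inj_on_def)
  also have "\<dots> = (\<Sum>y\<in>UNIV. \<Sum>ys\<in>first_hit_paths y g n. cyl_prob P E (Suc n) (x # ys) t)"
    by (rule sum.UNION_disjoint) (auto simp: finite_first_hit_paths, auto simp: first_hit_paths_def)
  also have "\<dots> = (\<Sum>y\<in>UNIV. \<Sum>ys\<in>first_hit_paths y g n. exp_delay (E x) (\<lambda>\<tau>. pmf (P x) y * cyl_prob P E n ys \<tau>) t)"
    by (intro sum.cong refl) (auto simp: cyl_prob_Cons exp_delay_cmult first_hit_paths_def)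
  also have "\<dots> = exp_delay (E x) (\<lambda>\<tau>. \<Sum>y\<in>UNIV. \<Sum>ys\<in>first_hit_paths y g n. pmf (P x) y * cyl_prob P E n ys \<tau>) t"
    using integrable by (simp add: exp_delay_sum Bochner_Integration.integrable_sum)
  finally show ?thesis
    using False by (simp add: first_hit_prob_def sum_distrib_left)
qed

lemma causal_prob_first_hit_prob: "causal_prob (first_hit_prob n x)"
proof (induction n arbitrary: x)
  case 0
  then show ?case by (simp add: causal_prob_def first_hit_prob_0[abs_def])
next
  case (Suc n)
  show ?case
  proof (cases "x = g")
    case True
    then show ?thesis by (simp add: first_hit_prob_Suc[abs_def] causal_prob_def)
  next
    case False
    then show ?thesis
      using Suc.IH by (simp add: first_hit_prob_Suc[abs_def] causal_prob_exp_delay causal_prob_mixture rate_pos)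
  qed
qed

lemma reach_prob_upto_Suc:
  "reach_prob_upto (Suc N) x t = (if x = g then (if 0 \<le> t then 1 else 0) else
     exp_delay (E x) (\<lambda>\<tau>. \<Sum>y\<in>UNIV. pmf (P x) y * reach_prob_upto N y \<tau>) t)"
proof (cases "x = g")
  case True
  then show ?thesis
    unfolding reach_prob_upto_def by (subst sum.lessThan_Suc_shift) (simp add: first_hit_prob_0 first_hit_prob_Suc)
next
  case False
  have "reach_prob_upto (Suc N) x t = (\<Sum>n<N. first_hit_prob (Suc n) x t)"
    unfolding reach_prob_upto_def using False by (subst sum.lessThan_Suc_shift) (simp add: first_hit_prob_0)
  also have "\<dots> = exp_delay (E x) (\<lambda>\<tau>. \<Sum>n<N. \<Sum>y\<in>UNIV. pmf (P x) y * first_hit_prob n y \<tau>) t"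
    using False by (simp add: first_hit_prob_Suc exp_delay_sum integrable_exp_dist_causal rate_pos
        causal_prob_mixture causal_prob_first_hit_prob)
  also have "\<dots> = exp_delay (E x) (\<lambda>\<tau>. \<Sum>y\<in>UNIV. pmf (P x) y * reach_prob_upto N y \<tau>) t"
    unfolding reach_prob_upto_def by (subst sum.swap) (simp add: sum_distrib_left)
  finally show ?thesis
    using False by simp
qed

lemma causal_prob_reach_prob_upto: "causal_prob (reach_prob_upto N x)"
proof (induction N arbitrary: x)
  case 0
  then show ?case by (simp add: causal_prob_def reach_prob_upto_def[abs_def])
next
  case (Suc N)
  show ?case
  proof (cases "x = g")
    case True
    then show ?thesis by (simp add: reach_prob_upto_Suc[abs_def] causal_prob_def)
  next
    case False
    then show ?thesis
      using Suc.IH by (simp add: reach_prob_upto_Suc[abs_def] causal_prob_exp_delay causal_prob_mixture rate_pos)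
  qed
qed

lemma reach_prob_upto_tendsto: "(\<lambda>N. reach_prob_upto N x t) \<longlonglongrightarrow> reach_prob P E g x t"
proof -
  have "summable (\<lambda>n. first_hit_prob n x t)"
  proof (rule summableI_nonneg_bounded)
    show "0 \<le> first_hit_prob n x t" for n
      by (rule causal_probD[OF causal_prob_first_hit_prob])
    show "(\<Sum>n<N. first_hit_prob n x t) \<le> 1" for N
      using causal_probD(2)[OF causal_prob_reach_prob_upto] by (simp add: reach_prob_upto_def)
  qed
  then show ?thesis
    unfolding reach_prob_upto_def[abs_def] reach_prob_def first_hit_prob_def[symmetric]
    by (rule summable_LIMSEQ)
qed

context
  fixes R :: "('s \<times> 's) set" and \<phi> :: "real \<Rightarrow> real"
  assumes goal_iff: "\<And>x x'. (x, x') \<in> R \<Longrightarrow> x = g \<longleftrightarrow> x' = g"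
    and bound_nonneg: "\<And>\<tau>. 0 \<le> \<tau> \<Longrightarrow> 0 \<le> \<phi> \<tau>"
    and one_step: "\<And>x x' h t. (x, x') \<in> R \<Longrightarrow> x \<noteq> g \<Longrightarrow> 0 \<le> t \<Longrightarrow> (\<And>y. causal_prob (h y)) \<Longrightarrow>
      (\<And>y y' \<tau>. (y, y') \<in> R \<Longrightarrow> 0 \<le> \<tau> \<Longrightarrow> h y \<tau> - h y' \<tau> \<le> \<phi> \<tau>) \<Longrightarrow>
      exp_delay (E x) (\<lambda>\<tau>. \<Sum>y\<in>UNIV. pmf (P x) y * h y \<tau>) t
        - exp_delay (E x') (\<lambda>\<tau>. \<Sum>y\<in>UNIV. pmf (P x') y * h y \<tau>) t \<le> \<phi> t"
begin

lemma reach_prob_upto_diff_le: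
  "(x, x') \<in> R \<Longrightarrow> 0 \<le> t \<Longrightarrow> reach_prob_upto N x t - reach_prob_upto N x' t \<le> \<phi> t"
proof (induction N arbitrary: x x' t)
  case 0
  then show ?case by (simp add: reach_prob_upto_def bound_nonneg)
next
  case (Suc N)
  show ?case
  proof (cases "x = g")
    case True
    then show ?thesis
      using goal_iff[OF Suc.prems(1)] bound_nonneg[OF Suc.prems(2)] by (simp add: reach_prob_upto_Suc)
  next
    case False
    moreover have "x' \<noteq> g"
      using False goal_iff[OF Suc.prems(1)] by simp
    ultimately show ?thesis
      using one_step[OF Suc.prems(1) False Suc.prems(2) causal_prob_reach_prob_upto Suc.IH]
      by (simp add: reach_prob_upto_Suc)
  qed
qed

lemma reach_prob_diff_le:
  assumes "(x, x') \<in> R" "0 \<le> t"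
  shows "reach_prob P E g x t - reach_prob P E g x' t \<le> \<phi> t"
  using tendsto_diff[OF reach_prob_upto_tendsto reach_prob_upto_tendsto]
  by (rule LIMSEQ_le_const2) (use reach_prob_upto_diff_le[OF assms] in auto)

lemma reach_prob_abs_diff_le:
  assumes "sym R" "(x, x') \<in> R" "0 \<le> t"
  shows "\<bar>reach_prob P E g x t - reach_prob P E g x' t\<bar> \<le> \<phi> t"
  using reach_prob_diff_le[OF assms(2,3)] reach_prob_diff_le[OF symD[OF assms(1,2)] assms(3)]
  by (simp add: abs_le_iff)

end

lemma reach_prob_abs_diff_le_of_eps_bisim:
  assumes std: "standing_assm P L g" and R: "eps_delta_bisim P E L \<epsilon> 0 R" and xx': "(x, x') \<in> R"
    and \<epsilon>: "0 \<le> \<epsilon>" and q: "\<And>y. E y \<le> q" and t: "0 \<le> t"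
  shows "\<bar>reach_prob P E g x t - reach_prob P E g x' t\<bar> \<le> 1 - exp (- (q * \<epsilon>) * t)"
proof (rule reach_prob_abs_diff_le[OF eps_delta_bisim_goal_iff[OF std R] _ _ eps_delta_bisim_sym[OF R] xx' t])
  show "0 \<le> 1 - exp (- (q * \<epsilon>) * \<tau>)" if "0 \<le> \<tau>" for \<tau>
    using rate_pos[of x] q[of x] \<epsilon> that by simp
  fix y y' :: 's and h and t' :: real
  assume yy': "(y, y') \<in> R" and t': "0 \<le> t'" and h: "\<And>z. causal_prob (h z)"
    and lip: "\<And>z z' \<tau>. (z, z') \<in> R \<Longrightarrow> 0 \<le> \<tau> \<Longrightarrow> h z \<tau> - h z' \<tau> \<le> 1 - exp (- (q * \<epsilon>) * \<tau>)"
  have "E y' = E y"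
    using eps_delta_bisimD(2)[OF R yy'] rate_pos[of y] rate_pos[of y'] by simp
  then show "exp_delay (E y) (\<lambda>\<tau>. \<Sum>z\<in>UNIV. pmf (P y) z * h z \<tau>) t'
      - exp_delay (E y') (\<lambda>\<tau>. \<Sum>z\<in>UNIV. pmf (P y') z * h z \<tau>) t' \<le> 1 - exp (- (q * \<epsilon>) * t')"
    using exp_delay_mixture_diff_le_same_rate[OF rate_pos q \<epsilon> t' eps_delta_bisimD(3)[OF R yy'] h lip]
    by simp
qed

lemma reach_prob_abs_diff_le_of_delta_bisim:
  assumes std: "standing_assm P L g" and R: "eps_delta_bisim P E L 0 \<delta> R" and xx': "(x, x') \<in> R"
    and \<delta>: "0 \<le> \<delta>" and q: "\<And>y. E y \<le> q" and t: "0 \<le> t"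
  shows "\<bar>reach_prob P E g x t - reach_prob P E g x' t\<bar> \<le> 1 - exp (- (q * (exp \<delta> - 1)) * t)"
proof (rule reach_prob_abs_diff_le[OF eps_delta_bisim_goal_iff[OF std R] _ _ eps_delta_bisim_sym[OF R] xx' t])
  show "0 \<le> 1 - exp (- (q * (exp \<delta> - 1)) * \<tau>)" if "0 \<le> \<tau>" for \<tau>
    using rate_pos[of x] q[of x] \<delta> that by simp
  fix y y' :: 's and h and t' :: real
  assume yy': "(y, y') \<in> R" and t': "0 \<le> t'" and h: "\<And>z. causal_prob (h z)"
    and lip: "\<And>z z' \<tau>. (z, z') \<in> R \<Longrightarrow> 0 \<le> \<tau> \<Longrightarrow> h z \<tau> - h z' \<tau> \<le> 1 - exp (- (q * (exp \<delta> - 1)) * \<tau>)"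
  have rates: "\<bar>E y - E y'\<bar> \<le> q * (exp \<delta> - 1)"
    using abs_diff_le_of_abs_ln_diff_le[OF rate_pos rate_pos q q eps_delta_bisimD(2)[OF R yy']] .
  have transfer: "measure_pmf.prob (P y) A \<le> measure_pmf.prob (P y') (R `` A)" for A
    using eps_delta_bisimD(3)[OF R yy'] by simp
  show "exp_delay (E y) (\<lambda>\<tau>. \<Sum>z\<in>UNIV. pmf (P y) z * h z \<tau>) t'
      - exp_delay (E y') (\<lambda>\<tau>. \<Sum>z\<in>UNIV. pmf (P y') z * h z \<tau>) t' \<le> 1 - exp (- (q * (exp \<delta> - 1)) * t')"
    by (rule exp_delay_mixture_diff_le_close_rates[OF rate_pos rate_pos rates t' transfer h lip])
qed

end

theorem corollary2:
  fixes P :: "'s::finite \<Rightarrow> 's pmf" and E :: "'s \<Rightarrow> real" and L :: "'s \<Rightarrow> 'l"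
    and g s s' :: 's and \<epsilon> \<delta> q t :: real
  assumes "ctmc P E"
    and "standing_assm P L g"
    and "0 \<le> \<epsilon>" and "0 \<le> \<delta>"
    and "q = Max (range E)"
    and "0 \<le> t"
    and "bisimilar P E L \<epsilon> \<delta> s s'"
  shows "(\<delta> = 0 \<longrightarrow> \<bar>reach_prob P E g s t - reach_prob P E g s' t\<bar> \<le> 1 - exp (- q * t * \<epsilon>))
       \<and> (\<epsilon> = 0 \<longrightarrow> \<bar>reach_prob P E g s t - reach_prob P E g s' t\<bar> \<le> 1 - exp (- q * t * (exp \<delta> - 1)))
       \<and> (\<epsilon> = 0 \<and> \<delta> = 0 \<longrightarrow> reach_prob P E g s t = reach_prob P E g s' t)"
proof -
  interpret goal_ctmc P E g
    using assms(1) by unfold_locales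
  obtain R where R: "eps_delta_bisim P E L \<epsilon> \<delta> R" and ss': "(s, s') \<in> R"
    using assms(7) unfolding bisimilar_def by blast
  have q: "E x \<le> q" for x
    using assms(5) by simp
  have "\<delta> = 0 \<Longrightarrow> \<bar>reach_prob P E g s t - reach_prob P E g s' t\<bar> \<le> 1 - exp (- (q * \<epsilon>) * t)"
    using reach_prob_abs_diff_le_of_eps_bisim[OF assms(2) _ ss' assms(3) q assms(6)] R by simp
  moreover have "\<epsilon> = 0 \<Longrightarrow>
      \<bar>reach_prob P E g s t - reach_prob P E g s' t\<bar> \<le> 1 - exp (- (q * (exp \<delta> - 1)) * t)"
    using reach_prob_abs_diff_le_of_delta_bisim[OF assms(2) _ ss' assms(4) q assms(6)] R by simp
  ultimately show ?thesis
    by (auto simp: mult_ac)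
qed

end
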